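(* Let $A \in \mathbb{R}^{m \times n_A}$ and $B \in \mathbb{R}^{m \times n_B}$, where the columns of $B$ are nonzero. Let $k \le n_B$ and let $OPT_k$ be a set of $k$ columns of $B$ maximizing $f_A(S)$ over all sets $S$ of $k$ columns of $B$, and assume $\sigma_{\min}(OPT_k) > 0$. Let $\varepsilon > 0$, and let $T_r$ be the set of columns output by $\textsc{Greedy}(A, B, r)$ for $r = \left\lceil \frac{16k}{\varepsilon\, \sigma_{\min}(OPT_k)} \right\rceil$. Then $$f_A(T_r) \ge (1-\varepsilon)\, f_A(OPT_k).$$
   Context: For a finite set $V$ of vectors in $\mathbb{R}^m$, $\Pi_V$ denotes the orthogonal projector onto $\mathrm{span}(V)$. For a matrix $M$ with $m$ rows, $f_M(V) = \|\Pi_V M\|_F^2$ (the squared Frobenius norm of the projection of $M$ onto $\mathrm{span}(V)$). For a finite set $V$ of nonzero vectors, $\sigma_{\min}(V)$ is the smallest squared singular value of the matrix whose columns are the vectors of $V$ rescaled to unit length, i.e. $\inf_{\|x\|_2=1}\|Mx\|_2^2$ for that matrix $M$. The algorithm $\textsc{Greedy}(A, B, r)$: start with $S = \emptyset$; for $i = 1, \dots, r$, pick a column $B_j$ of $B$ maximizing $f_A(S \cup \{B_j\})$ and set $S \leftarrow S \cup \{B_j\}$; return $S$. *)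

theory Defs
  imports "HOL-Analysis.Analysis"
begin

definition proj_span :: "('a::euclidean_space) set \<Rightarrow> 'a \<Rightarrow> 'a" where
  "proj_span V x = (THE y. y \<in> span V \<and> (\<forall>w\<in>span V. (x - y) \<bullet> w = 0))"

definition fM :: "real^'n^'m \<Rightarrow> (real^'m) set \<Rightarrow> real" where
  "fM M V = (\<Sum>j\<in>UNIV. (norm (proj_span V (column j M)))\<^sup>2)"

text \<open>sigma_min(V): smallest squared singular value of the matrix whose columns are
  the vectors of V normalised to unit length; coefficient vectors x are indexed by V.\<close>
definition sigma_min :: "('a::euclidean_space) set \<Rightarrow> real" where
  "sigma_min V = Inf {(norm (\<Sum>v\<in>V. x v *\<^sub>R (v /\<^sub>R norm v)))\<^sup>2 | x.
                         (\<Sum>v\<in>V. (x v)\<^sup>2) = 1}"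

definition columns :: "real^'n^'m \<Rightarrow> (real^'m) set" where
  "columns M = {column j M | j. True}"

text \<open>greedy A B i S: S is a possible state of Greedy(A,B,.) after i iterations
  (any tie-breaking among maximizers).\<close>
inductive greedy :: "real^'na^'m \<Rightarrow> real^'nb^'m \<Rightarrow> nat \<Rightarrow> (real^'m) set \<Rightarrow> bool"
  for A B where
  greedy_0: "greedy A B 0 {}"
| greedy_Suc: "greedy A B i S \<Longrightarrow>
     (\<forall>j'. fM A (insert (column j' B) S) \<le> fM A (insert (column j B) S)) \<Longrightarrow>
     greedy A B (Suc i) (insert (column j B) S)"

end

theory Submission
  imports Defs
begin

text \<open>Fix any finite set \<open>W\<close> of nonzero columns with \<open>\<sigma> = sigma_min W > 0\<close>,
  write \<open>F = f(W)\<close> and let \<open>D = F - f(S)\<close> be the deficit of the current greedy set \<open>S\<close>.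
  Adding a column \<open>v\<close> with \<open>u = v/|v|\<close> raises the projected mass of every column \<open>a\<close> of \<open>A\<close>
  by at least \<open>(u \<bullet> (a - \<Pi>\<^sub>S a))\<^sup>2\<close>. Summing over \<open>v \<in> W\<close> and using \<open>\<sigma>\<close>, the greedy
  column gains at least \<open>\<sigma>/|W| \<cdot> \<Sigma>\<^sub>j |\<Pi>\<^sub>W (a\<^sub>j - \<Pi>\<^sub>S a\<^sub>j)|\<^sup>2 \<ge> \<sigma> D\<^sup>2 / (4 |W| F)\<close>.
  The recurrence \<open>D' \<le> D - \<sigma> D\<^sup>2/(4|W|F)\<close> yields \<open>i \<sigma> D\<^sub>i \<le> 4 |W| F\<close>, so after
  \<open>r \<ge> 16|W|/(\<epsilon>\<sigma>)\<close> steps the deficit is at most \<open>\<epsilon>F/4\<close>.\<close>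

lemma ex1_proj_span:
  fixes V :: "'a::euclidean_space set"
  shows "\<exists>!y. y \<in> span V \<and> (\<forall>w\<in>span V. (x - y) \<bullet> w = 0)"
proof -
  obtain y z where y: "y \<in> span V" and z: "\<And>w. w \<in> span V \<Longrightarrow> orthogonal z w"
    and xyz: "x = y + z"
    using orthogonal_subspace_decomp_exists by blast
  have y_ok: "y \<in> span V \<and> (\<forall>w\<in>span V. (x - y) \<bullet> w = 0)"
    using y z xyz by (simp add: orthogonal_def)
  show ?thesis
  proof (rule ex1I[of _ y])
    fix y' assume y': "y' \<in> span V \<and> (\<forall>w\<in>span V. (x - y') \<bullet> w = 0)"
    have "y' - y \<in> span V" using y' y span_diff by blast
    then have "(x - y) \<bullet> (y' - y) = 0" "(x - y') \<bullet> (y' - y) = 0" using y_ok y' by auto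
    then have "(y' - y) \<bullet> (y' - y) = 0" by (simp add: inner_diff_left inner_diff_right)
    then show "y' = y" by simp
  qed (fact y_ok)
qed

lemma proj_span_in_span: "proj_span V x \<in> span V"
  and proj_span_orthogonal: "w \<in> span V \<Longrightarrow> (x - proj_span V x) \<bullet> w = 0"
  using theI'[OF ex1_proj_span[of V x]] unfolding proj_span_def by auto

lemma proj_span_eqI:
  fixes V :: "'a::euclidean_space set"
  assumes "y \<in> span V" "\<And>w. w \<in> span V \<Longrightarrow> (x - y) \<bullet> w = 0"
  shows "proj_span V x = y"
  using ex1_proj_span[of V x] proj_span_in_span proj_span_orthogonal assms by blast

lemma proj_span_add: "proj_span V (x + y) = proj_span V x + proj_span V y"
proof (rule proj_span_eqI)
  show "proj_span V x + proj_span V y \<in> span V"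
    using proj_span_in_span span_add by blast
  fix w assume "w \<in> span V"
  then have "(x - proj_span V x) \<bullet> w = 0" "(y - proj_span V y) \<bullet> w = 0"
    by (simp_all add: proj_span_orthogonal)
  then show "(x + y - (proj_span V x + proj_span V y)) \<bullet> w = 0"
    by (simp add: inner_diff_left inner_add_left)
qed

lemma proj_span_empty: "proj_span {} x = 0"
  using proj_span_in_span[where V="{}" and x=x] by simp

lemma inner_proj_span_self: "x \<bullet> proj_span V x = (norm (proj_span V x))\<^sup>2"
  using proj_span_orthogonal[OF proj_span_in_span, where V=V and x=x]
  by (simp add: inner_diff_left power2_norm_eq_inner)

lemma norm_proj_span_pythagoras:
  "(norm x)\<^sup>2 = (norm (proj_span V x))\<^sup>2 + (norm (x - proj_span V x))\<^sup>2"
  using proj_span_orthogonal[OF proj_span_in_span, where V=V and x=x]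
  by (simp add: power2_norm_eq_inner inner_diff_left inner_diff_right inner_commute)

lemma norm_proj_span_le: "norm (proj_span V x) \<le> norm x"
  using norm_proj_span_pythagoras[of x V]
  by (metis le_add_same_cancel1 norm_ge_zero power2_le_imp_le zero_le_power2)

lemma norm_proj_span_ge:
  assumes "y \<in> span V"
  shows "2 * (x \<bullet> y) - (norm y)\<^sup>2 \<le> (norm (proj_span V x))\<^sup>2"
proof -
  have "0 \<le> (norm (proj_span V x - y))\<^sup>2" by simp
  also have "\<dots> = (norm (proj_span V x))\<^sup>2 - 2 * (proj_span V x \<bullet> y) + (norm y)\<^sup>2"
    by (simp add: power2_norm_eq_inner inner_diff_left inner_diff_right inner_commute)
  finally show ?thesis
    using proj_span_orthogonal[OF assms, where x=x] by (simp add: inner_diff_left)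
qed

text \<open>Apply \<open>norm_proj_span_ge\<close> to the test vector \<open>\<Pi>\<^sub>S a + t (u - \<Pi>\<^sub>S u)\<close>
  with \<open>t = u \<bullet> (a - \<Pi>\<^sub>S a)\<close>, which lies in \<open>span (insert v S)\<close>.\<close>
lemma norm_proj_span_insert_ge:
  fixes S :: "'a::euclidean_space set" and v a :: 'a
  defines "u \<equiv> v /\<^sub>R norm v"
  shows "(norm (proj_span S a))\<^sup>2 + (u \<bullet> (a - proj_span S a))\<^sup>2
           \<le> (norm (proj_span (insert v S) a))\<^sup>2"
proof -
  let ?p = "proj_span S a" and ?q = "u - proj_span S u"
  define t where "t = u \<bullet> (a - ?p)"
  have "span S \<subseteq> span (insert v S)" by (simp add: span_mono subset_insertI)
  moreover have "u \<in> span (insert v S)" unfolding u_def by (simp add: span_base span_mul)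
  ultimately have y_in: "?p + t *\<^sub>R ?q \<in> span (insert v S)"
    using proj_span_in_span by (blast intro: span_add span_diff span_mul)
  have q_perp_p: "?q \<bullet> ?p = 0" by (rule proj_span_orthogonal[OF proj_span_in_span])
  have "(a - ?p) \<bullet> proj_span S u = 0" by (rule proj_span_orthogonal[OF proj_span_in_span])
  then have a_q: "a \<bullet> ?q = t"
    using q_perp_p unfolding t_def by (simp add: inner_diff_left inner_diff_right inner_commute)
  have "(norm ?q)\<^sup>2 \<le> (norm u)\<^sup>2" using norm_proj_span_pythagoras[of u S] by simp
  also have "\<dots> \<le> 1" unfolding u_def by (cases "v = 0") auto
  finally have "t\<^sup>2 * (norm ?q)\<^sup>2 \<le> t\<^sup>2" by (simp add: mult_left_le)
  moreover have "(norm (?p + t *\<^sub>R ?q))\<^sup>2 = (norm ?p)\<^sup>2 + t\<^sup>2 * (norm ?q)\<^sup>2"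
    using q_perp_p unfolding power2_norm_eq_inner
    by (simp add: inner_add_left inner_add_right inner_commute algebra_simps power2_eq_square)
  moreover have "2 * (a \<bullet> (?p + t *\<^sub>R ?q)) = 2 * (norm ?p)\<^sup>2 + 2 * t\<^sup>2"
    using a_q inner_proj_span_self[of a S] by (simp add: inner_add_right power2_eq_square)
  ultimately show ?thesis
    using norm_proj_span_ge[OF y_in, of a] unfolding t_def[symmetric] by linarith
qed

lemma fM_nonneg: "0 \<le> fM A V"
  unfolding fM_def by (rule sum_nonneg) simp

lemma fM_empty: "fM A {} = 0"
  unfolding fM_def by (simp add: proj_span_empty)

lemma fM_insert_gain:
  "fM A S + (\<Sum>j\<in>UNIV. ((v /\<^sub>R norm v) \<bullet> (column j A - proj_span S (column j A)))\<^sup>2)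
     \<le> fM A (insert v S)"
  unfolding fM_def sum.distrib[symmetric] by (rule sum_mono) (rule norm_proj_span_insert_ge)

lemma fM_insert_ge: "fM A S \<le> fM A (insert v S)"
  by (rule order_trans[OF _ fM_insert_gain]) (simp add: sum_nonneg)

lemma span_eq_normalized_combination:
  fixes W :: "'a::euclidean_space set"
  assumes "finite W" "0 \<notin> W" "z \<in> span W"
  obtains x where "z = (\<Sum>v\<in>W. x v *\<^sub>R (v /\<^sub>R norm v))"
proof -
  obtain c where c: "z = (\<Sum>v\<in>W. c v *\<^sub>R v)"
    using span_finite[OF assms(1)] assms(3) by auto
  have "c v *\<^sub>R v = (c v * norm v) *\<^sub>R (v /\<^sub>R norm v)" if "v \<in> W" for v
    using that assms(2) by (cases "v = 0") auto
  then have "z = (\<Sum>v\<in>W. (c v * norm v) *\<^sub>R (v /\<^sub>R norm v))"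
    unfolding c by (rule sum.cong[OF refl])
  then show ?thesis by (rule that)
qed

text \<open>The infimum in \<open>sigma_min\<close> is over unit coefficient vectors; rescaling \<open>x\<close> by
  \<open>1/|x|\<close> reduces the general case to that one.\<close>
lemma sigma_min_mult_le_norm_combination:
  fixes W :: "'a::euclidean_space set"
  assumes "finite W"
  shows "sigma_min W * (\<Sum>v\<in>W. (x v)\<^sup>2) \<le> (norm (\<Sum>v\<in>W. x v *\<^sub>R (v /\<^sub>R norm v)))\<^sup>2"
proof (cases "(\<Sum>v\<in>W. (x v)\<^sup>2) = 0")
  case False
  let ?C = "\<Sum>v\<in>W. (x v)\<^sup>2"
  have C_pos: "?C > 0" using False by (simp add: order_le_neq_trans sum_nonneg)
  define s where "s = sqrt ?C"
  have s_pos: "s > 0" and s_sq: "s\<^sup>2 = ?C" using C_pos unfolding s_def by simp_all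
  define y where "y v = x v / s" for v
  have "(\<Sum>v\<in>W. (y v)\<^sup>2) = ?C / s\<^sup>2"
    unfolding y_def by (simp add: power_divide sum_divide_distrib)
  then have "(\<Sum>v\<in>W. (y v)\<^sup>2) = 1" using s_sq C_pos by simp
  then have "sigma_min W \<le> (norm (\<Sum>v\<in>W. y v *\<^sub>R (v /\<^sub>R norm v)))\<^sup>2"
    unfolding sigma_min_def by (intro cInf_lower bdd_belowI[of _ 0]) auto
  also have "(\<Sum>v\<in>W. y v *\<^sub>R (v /\<^sub>R norm v)) = (1/s) *\<^sub>R (\<Sum>v\<in>W. x v *\<^sub>R (v /\<^sub>R norm v))"
    unfolding y_def scaleR_sum_right by (simp add: divide_inverse mult_ac)
  finally have "sigma_min W \<le> (norm (\<Sum>v\<in>W. x v *\<^sub>R (v /\<^sub>R norm v)))\<^sup>2 / ?C"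
    using s_pos s_sq by (simp add: power_divide)
  then show ?thesis using C_pos by (simp add: le_divide_eq mult.commute)
qed simp

lemma two_mult_le_weighted_squares:
  fixes s a b :: real
  assumes "s > 0"
  shows "2 * (a * b) \<le> s * a\<^sup>2 + b\<^sup>2 / s"
proof -
  have "0 \<le> (s * a - b)\<^sup>2" by simp
  then have "2 * (a * b) * s \<le> (s * a\<^sup>2 + b\<^sup>2 / s) * s"
    using assms by (simp add: power2_eq_square algebra_simps)
  then show ?thesis using assms by simp
qed

text \<open>Writing \<open>\<Pi>\<^sub>W w = \<Sigma> x\<^sub>v u\<^sub>v\<close> with unit vectors \<open>u\<^sub>v\<close>, we have
  \<open>|\<Pi>\<^sub>W w|\<^sup>2 = \<Sigma> x\<^sub>v (u\<^sub>v \<bullet> w)\<close>; weighted AM-GM with weight \<open>\<sigma>\<close> and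
  \<open>\<sigma> \<Sigma> x\<^sub>v\<^sup>2 \<le> |\<Pi>\<^sub>W w|\<^sup>2\<close> finish the proof.\<close>
lemma sigma_min_mult_norm_proj_span_le:
  fixes W :: "'a::euclidean_space set"
  assumes fin: "finite W" and nz: "0 \<notin> W" and pos: "sigma_min W > 0"
  shows "sigma_min W * (norm (proj_span W w))\<^sup>2 \<le> (\<Sum>v\<in>W. ((v /\<^sub>R norm v) \<bullet> w)\<^sup>2)"
proof -
  let ?s = "sigma_min W" and ?z = "proj_span W w"
  let ?Q = "\<Sum>v\<in>W. ((v /\<^sub>R norm v) \<bullet> w)\<^sup>2"
  obtain x where z: "?z = (\<Sum>v\<in>W. x v *\<^sub>R (v /\<^sub>R norm v))"
    using span_eq_normalized_combination[OF fin nz proj_span_in_span] by blast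
  have inner_z: "v \<bullet> w = v \<bullet> ?z" if "v \<in> W" for v
    using proj_span_orthogonal[OF span_base[OF that], where x=w]
    by (simp add: inner_diff_left inner_diff_right inner_commute)
  have "2 * (norm ?z)\<^sup>2 = 2 * (?z \<bullet> (\<Sum>v\<in>W. x v *\<^sub>R (v /\<^sub>R norm v)))"
    by (metis power2_norm_eq_inner z)
  also have "\<dots> = (\<Sum>v\<in>W. 2 * (x v * ((v /\<^sub>R norm v) \<bullet> w)))"
    unfolding inner_sum_right sum_distrib_left
    by (rule sum.cong[OF refl]) (simp add: inner_z inner_commute)
  also have "\<dots> \<le> (\<Sum>v\<in>W. ?s * (x v)\<^sup>2 + ((v /\<^sub>R norm v) \<bullet> w)\<^sup>2 / ?s)"
    by (rule sum_mono) (rule two_mult_le_weighted_squares[OF pos])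
  also have "\<dots> = ?s * (\<Sum>v\<in>W. (x v)\<^sup>2) + ?Q / ?s"
    by (simp add: sum.distrib sum_distrib_left sum_divide_distrib)
  also have "\<dots> \<le> (norm ?z)\<^sup>2 + ?Q / ?s"
    using sigma_min_mult_le_norm_combination[OF fin, of x] z by simp
  finally have "(norm ?z)\<^sup>2 \<le> ?Q / ?s" by simp
  then show ?thesis using pos by (simp add: le_divide_eq mult.commute)
qed

lemma power2_diff_le_of_le_add:
  fixes x y z :: real
  assumes "0 \<le> x" "0 \<le> y" "0 \<le> z" "x \<le> y + z"
  shows "x\<^sup>2 - y\<^sup>2 \<le> 2 * (x * z)"
proof (cases "x \<le> y")
  case True
  then have "x\<^sup>2 \<le> y\<^sup>2" using assms(1) by (rule power_mono)
  moreover have "0 \<le> x * z" using assms by simp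
  ultimately show ?thesis by linarith
next
  case False
  have "x\<^sup>2 - y\<^sup>2 = (x - y) * (x + y)" by (simp add: power2_eq_square algebra_simps)
  also have "\<dots> \<le> z * (2 * x)"
    using assms False by (intro mult_mono) auto
  finally show ?thesis by (simp add: mult_ac)
qed

text \<open>Cauchy-Schwarz in disguise: \<open>\<Sigma>(x\<^sup>2 - y\<^sup>2) \<le> \<Sigma> 2xz \<le> t\<Sigma>x\<^sup>2 + \<Sigma>z\<^sup>2/t\<close>, and the
  choice \<open>t = D/(2\<Sigma>x\<^sup>2)\<close> turns this into the claim.\<close>
lemma sum_power2_diff_squared_le:
  fixes x y z :: "'i \<Rightarrow> real"
  assumes "\<And>i. 0 \<le> x i" "\<And>i. 0 \<le> y i" "\<And>i. 0 \<le> z i" "\<And>i. x i \<le> y i + z i"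
    and D_nonneg: "0 \<le> (\<Sum>i\<in>I. (x i)\<^sup>2) - (\<Sum>i\<in>I. (y i)\<^sup>2)"
  shows "((\<Sum>i\<in>I. (x i)\<^sup>2) - (\<Sum>i\<in>I. (y i)\<^sup>2))\<^sup>2 \<le> 4 * (\<Sum>i\<in>I. (x i)\<^sup>2) * (\<Sum>i\<in>I. (z i)\<^sup>2)"
proof -
  define X where "X = (\<Sum>i\<in>I. (x i)\<^sup>2)"
  define Z where "Z = (\<Sum>i\<in>I. (z i)\<^sup>2)"
  define D where "D = X - (\<Sum>i\<in>I. (y i)\<^sup>2)"
  have X_nonneg: "0 \<le> X" and Z_nonneg: "0 \<le> Z"
    unfolding X_def Z_def by (simp_all add: sum_nonneg)
  have "D\<^sup>2 \<le> 4 * X * Z"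
  proof (cases "D = 0")
    case False
    then have D_pos: "D > 0" using D_nonneg unfolding D_def X_def by simp
    have X_pos: "X > 0"
      using D_pos unfolding D_def by (smt (verit) sum_nonneg zero_le_power2)
    define t where "t = D / (2 * X)"
    have t_pos: "t > 0" using D_pos X_pos unfolding t_def by simp
    have "D = (\<Sum>i\<in>I. (x i)\<^sup>2 - (y i)\<^sup>2)" unfolding D_def X_def by (simp add: sum_subtractf)
    also have "\<dots> \<le> (\<Sum>i\<in>I. t * (x i)\<^sup>2 + (z i)\<^sup>2 / t)"
      using power2_diff_le_of_le_add two_mult_le_weighted_squares[OF t_pos] assms(1-4)
      by (intro sum_mono) (meson order_trans)
    also have "\<dots> = t * X + Z / t"
      unfolding X_def Z_def by (simp add: sum.distrib sum_distrib_left sum_divide_distrib)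
    also have "\<dots> = D / 2 + 2 * X * Z / D" unfolding t_def using X_pos by simp
    finally have "D * D \<le> 4 * X * Z" using D_pos by (simp add: field_simps)
    then show ?thesis by (simp add: power2_eq_square)
  qed (use X_nonneg Z_nonneg in simp)
  then show ?thesis unfolding D_def X_def Z_def .
qed

lemma fM_deficit_squared_le:
  assumes "fM A S \<le> fM A W"
  shows "(fM A W - fM A S)\<^sup>2
           \<le> 4 * fM A W * (\<Sum>j\<in>UNIV. (norm (proj_span W (column j A - proj_span S (column j A))))\<^sup>2)"
proof -
  have triangle: "norm (proj_span W a) \<le> norm (proj_span S a) + norm (proj_span W (a - proj_span S a))"
    for a
  proof -
    have "proj_span W a = proj_span W (proj_span S a) + proj_span W (a - proj_span S a)"
      by (simp flip: proj_span_add)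
    then have "norm (proj_span W a)
                 \<le> norm (proj_span W (proj_span S a)) + norm (proj_span W (a - proj_span S a))"
      by (metis norm_triangle_ineq)
    then show ?thesis using norm_proj_span_le[of W "proj_span S a"] by linarith
  qed
  show ?thesis
    using sum_power2_diff_squared_le[where I=UNIV and x="\<lambda>j. norm (proj_span W (column j A))"
        and y="\<lambda>j. norm (proj_span S (column j A))"
        and z="\<lambda>j. norm (proj_span W (column j A - proj_span S (column j A)))"]
      triangle assms
    unfolding fM_def by simp
qed

lemma sigma_min_mult_residual_le_gain:
  assumes fin: "finite W" and nz: "0 \<notin> W" and pos: "sigma_min W > 0"
    and best: "\<forall>v\<in>W. fM A (insert v S) \<le> fM A S'"
  shows "sigma_min W * (\<Sum>j\<in>UNIV. (norm (proj_span W (column j A - proj_span S (column j A))))\<^sup>2)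
           \<le> real (card W) * (fM A S' - fM A S)"
proof -
  let ?w = "\<lambda>j. column j A - proj_span S (column j A)"
  have "sigma_min W * (\<Sum>j\<in>UNIV. (norm (proj_span W (?w j)))\<^sup>2)
          \<le> (\<Sum>j\<in>UNIV. \<Sum>v\<in>W. ((v /\<^sub>R norm v) \<bullet> ?w j)\<^sup>2)"
    unfolding sum_distrib_left
    by (rule sum_mono) (rule sigma_min_mult_norm_proj_span_le[OF fin nz pos])
  also have "\<dots> = (\<Sum>v\<in>W. \<Sum>j\<in>UNIV. ((v /\<^sub>R norm v) \<bullet> ?w j)\<^sup>2)" by (rule sum.swap)
  also have "\<dots> \<le> (\<Sum>v\<in>W. fM A S' - fM A S)"
  proof (rule sum_mono)
    fix v assume "v \<in> W"
    then have "fM A (insert v S) \<le> fM A S'" using best by blast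
    then show "(\<Sum>j\<in>UNIV. ((v /\<^sub>R norm v) \<bullet> ?w j)\<^sup>2) \<le> fM A S' - fM A S"
      using fM_insert_gain[of A S v] by linarith
  qed
  finally show ?thesis by simp
qed

lemma greedy_step_progress:
  assumes fin: "finite W" and nz: "0 \<notin> W" and pos: "sigma_min W > 0"
    and best: "\<forall>v\<in>W. fM A (insert v S) \<le> fM A S'"
    and deficit: "fM A S \<le> fM A W"
  shows "sigma_min W * (fM A W - fM A S)\<^sup>2 \<le> 4 * real (card W) * fM A W * (fM A S' - fM A S)"
proof -
  let ?Z = "\<Sum>j\<in>UNIV. (norm (proj_span W (column j A - proj_span S (column j A))))\<^sup>2"
  have "sigma_min W * (fM A W - fM A S)\<^sup>2 \<le> sigma_min W * (4 * fM A W * ?Z)"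
    using fM_deficit_squared_le[OF deficit] pos by simp
  also have "\<dots> = 4 * fM A W * (sigma_min W * ?Z)" by (simp add: mult_ac)
  also have "\<dots> \<le> 4 * fM A W * (real (card W) * (fM A S' - fM A S))"
    using sigma_min_mult_residual_le_gain[OF fin nz pos best] fM_nonneg[of A W]
    by (intro mult_left_mono) auto
  finally show ?thesis by (simp add: mult_ac)
qed

text \<open>The discrete analogue of \<open>X' = -X\<^sup>2\<close>, whose solutions decay like \<open>1/i\<close>.\<close>
lemma mult_le_one_of_quadratic_decrease:
  fixes X X' :: real
  assumes "real i * X \<le> 1" "X' \<le> X - X\<^sup>2"
  shows "real (Suc i) * X' \<le> 1"
proof (cases "X \<le> 1")
  case True
  have "0 \<le> (1 - real i * X) * (1 - X) + X\<^sup>2" using True assms(1) by simp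
  then have "real (Suc i) * (X - X\<^sup>2) \<le> 1" by (simp add: algebra_simps power2_eq_square)
  moreover have "real (Suc i) * X' \<le> real (Suc i) * (X - X\<^sup>2)"
    using assms(2) by (intro mult_left_mono) auto
  ultimately show ?thesis by linarith
next
  case False
  then have "X * 1 \<le> X * X" by (intro mult_left_mono) auto
  then have "X' \<le> 0" using assms(2) by (simp add: power2_eq_square)
  then show ?thesis using mult_nonneg_nonpos[of "real (Suc i)" X'] by linarith
qed

lemma mult_le_of_quadratic_decrease:
  fixes s K D D' :: real
  assumes s_pos: "s > 0" and K_pos: "K > 0"
    and bound: "real i * s * D \<le> K" and decrease: "s * D\<^sup>2 \<le> K * (D - D')"
  shows "real (Suc i) * s * D' \<le> K"
proof -
  define X where "X = s * D / K"
  define X' where "X' = s * D' / K"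
  have "X - X\<^sup>2 - X' = s / K\<^sup>2 * (K * (D - D') - s * D\<^sup>2)"
    using K_pos unfolding X_def X'_def by (simp add: field_simps power2_eq_square)
  also have "\<dots> \<ge> 0" using decrease s_pos by simp
  finally have "X' \<le> X - X\<^sup>2" by simp
  moreover have "real i * X \<le> 1"
    using bound K_pos unfolding X_def by (simp add: divide_le_eq mult_ac)
  ultimately have "real (Suc i) * X' \<le> 1" by (rule mult_le_one_of_quadratic_decrease[rotated])
  then show ?thesis using K_pos unfolding X'_def by (simp add: divide_le_eq mult_ac)
qed

lemma greedy_deficit_bound:
  assumes fin: "finite W" and nz: "0 \<notin> W" and pos: "sigma_min W > 0"
    and W_cols: "W \<subseteq> columns B" and F_pos: "fM A W > 0"
    and "greedy A B i S"
  shows "real i * sigma_min W * (fM A W - fM A S) \<le> 4 * real (card W) * fM A W"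
  using \<open>greedy A B i S\<close>
proof (induction rule: greedy.induct)
  case (greedy_Suc i S j)
  let ?S' = "insert (column j B) S"
  define K where "K = 4 * real (card W) * fM A W"
  define D where "D = fM A W - fM A S"
  define D' where "D' = fM A W - fM A ?S'"
  have "W \<noteq> {}" using F_pos fM_empty[of A] by auto
  then have "card W > 0" using fin by (simp add: card_gt_0_iff)
  then have K_pos: "K > 0" unfolding K_def using F_pos by simp
  have "real (Suc i) * sigma_min W * D' \<le> K"
  proof (cases "0 \<le> D")
    case True
    have "\<forall>v\<in>W. fM A (insert v S) \<le> fM A ?S'"
    proof
      fix v assume "v \<in> W"
      then have "v \<in> columns B" using W_cols by blast
      then obtain j' where "v = column j' B" unfolding columns_def by blast
      then show "fM A (insert v S) \<le> fM A ?S'" using greedy_Suc.hyps(2) by simp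
    qed
    moreover have "fM A S \<le> fM A W" using True unfolding D_def by simp
    ultimately have "sigma_min W * D\<^sup>2 \<le> K * (fM A ?S' - fM A S)"
      unfolding K_def D_def by (rule greedy_step_progress[OF fin nz pos])
    then have "sigma_min W * D\<^sup>2 \<le> K * (D - D')" unfolding D_def D'_def by simp
    moreover have "real i * sigma_min W * D \<le> K" using greedy_Suc.IH unfolding K_def D_def .
    ultimately show ?thesis using mult_le_of_quadratic_decrease[OF pos K_pos] by blast
  next
    case False
    then have "D' \<le> 0" using fM_insert_ge[of A S "column j B"] unfolding D_def D'_def by simp
    then have "real (Suc i) * sigma_min W * D' \<le> 0"
      using pos by (simp add: mult_nonneg_nonpos)
    then show ?thesis using K_pos by linarith
  qed
  then show ?case unfolding K_def D'_def .
qed (use F_pos in simp)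


lemma greedy_approximation:
  assumes fin: "finite W" and nz: "0 \<notin> W" and pos: "sigma_min W > 0"
    and W_cols: "W \<subseteq> columns B" and eps: "\<epsilon> > 0"
    and steps: "16 * real (card W) \<le> \<epsilon> * (real r * sigma_min W)"
    and "greedy A B r T"
  shows "(1 - \<epsilon>) * fM A W \<le> fM A T"
proof (cases "fM A W > 0")
  case F_pos: True
  let ?k = "real (card W)" and ?F = "fM A W"
  define D where "D = ?F - fM A T"
  have "W \<noteq> {}" using F_pos fM_empty[of A] by auto
  then have k_pos: "?k > 0" using fin by (simp add: card_gt_0_iff)
  have bound: "real r * sigma_min W * D \<le> 4 * ?k * ?F"
    using greedy_deficit_bound[OF fin nz pos W_cols F_pos \<open>greedy A B r T\<close>] unfolding D_def .
  have "D \<le> \<epsilon> * ?F / 4"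
  proof (cases "D \<le> 0")
    case False
    have "16 * ?k * D \<le> \<epsilon> * (real r * sigma_min W) * D"
      using steps False by (intro mult_right_mono) auto
    also have "\<dots> \<le> \<epsilon> * (4 * ?k * ?F)"
      using bound eps by (simp add: mult.assoc)
    finally have "?k * (4 * D) \<le> ?k * (\<epsilon> * ?F)" by (simp add: algebra_simps)
    then show ?thesis using k_pos by simp
  qed (use mult_pos_pos[OF eps F_pos] in simp)
  then show ?thesis using mult_pos_pos[OF eps F_pos] unfolding D_def by (simp add: algebra_simps)
next
  case False
  then show ?thesis using fM_nonneg[of A W] fM_nonneg[of A T] by simp
qed

theorem theorem1:
  fixes A :: "real^'na^'m" and B :: "real^'nb^'m"
    and k :: nat and OPT T :: "(real^'m) set" and \<epsilon> :: real
  assumes "\<forall>j. column j B \<noteq> 0"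
    and "k \<le> CARD('nb)"
    and "OPT \<subseteq> columns B" and "card OPT = k"
    and "\<forall>S. S \<subseteq> columns B \<and> card S = k \<longrightarrow> fM A S \<le> fM A OPT"
    and "sigma_min OPT > 0"
    and "\<epsilon> > 0"
    and "greedy A B (nat \<lceil>16 * real k / (\<epsilon> * sigma_min OPT)\<rceil>) T"
  shows "fM A T \<ge> (1 - \<epsilon>) * fM A OPT"
proof -
  define r where "r = nat \<lceil>16 * real k / (\<epsilon> * sigma_min OPT)\<rceil>"
  have "columns B = range (\<lambda>j. column j B)" unfolding columns_def by auto
  then have fin: "finite OPT" using assms(3) finite_subset by fastforce
  have nz: "0 \<notin> OPT" using assms(1,3) unfolding columns_def by auto
  have "16 * real k / (\<epsilon> * sigma_min OPT) \<le> real r" unfolding r_def by (rule real_nat_ceiling_ge)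
  then have "16 * real (card OPT) \<le> \<epsilon> * (real r * sigma_min OPT)"
    using assms(4,6,7) by (simp add: divide_le_eq mult_ac)
  from greedy_approximation[OF fin nz assms(6,3,7) this assms(8)[folded r_def]]
  show ?thesis .
qed

end
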